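(* Let $G=(V,E)$ be a finite simple graph with $n=|V|$ vertices and $m=|E|$ edges, where $n+m$ is even, and let $L$ be its connection matrix. Then $L^2$ is similar over $\mathbb{R}$ to a real symplectic matrix, i.e. to a matrix $S$ satisfying $S^TJS=J$, where $J=\begin{pmatrix}0&I\\-I&0\end{pmatrix}$ is the standard $(n+m)\times(n+m)$ symplectic form.
   Context: Let $G=(V,E)$ be a finite simple graph. Its associated $1$-dimensional simplicial complex is the set of simplices $X=\{\{v\}: v\in V\}\cup E$, where each edge is regarded as a $2$-element subset of $V$; index $(|V|+|E|)\times(|V|+|E|)$ matrices by $X$. The connection matrix $L$ has $L(x,y)=1$ if $x\cap y\neq\emptyset$ and $L(x,y)=0$ otherwise. *)

theory Defs
  imports "Jordan_Normal_Form.Matrix"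
begin

definition simple_graph :: "'a set \<Rightarrow> 'a set set \<Rightarrow> bool" where
  "simple_graph V E \<longleftrightarrow> finite V \<and> (\<forall>e\<in>E. e \<subseteq> V \<and> card e = 2)"

definition simplices :: "'a set \<Rightarrow> 'a set set \<Rightarrow> 'a set set" where
  "simplices V E = (\<lambda>v. {v}) ` V \<union> E"

text \<open>Connection matrix, with rows/columns indexed by simplices via an
enumeration f of the simplices by 0..<N.\<close>
definition connection_mat :: "nat \<Rightarrow> (nat \<Rightarrow> 'a set) \<Rightarrow> real mat" where
  "connection_mat N f = mat N N (\<lambda>(i,j). if f i \<inter> f j \<noteq> {} then 1 else 0)"

definition std_symplectic :: "nat \<Rightarrow> real mat" where
  "std_symplectic k = four_block_mat (0\<^sub>m k k) (1\<^sub>m k) (- 1\<^sub>m k) (0\<^sub>m k k)"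

definition symplectic_mat :: "nat \<Rightarrow> real mat \<Rightarrow> bool" where
  "symplectic_mat k S \<longleftrightarrow> S \<in> carrier_mat (2*k) (2*k) \<and>
     transpose_mat S * std_symplectic k * S = std_symplectic k"

end

theory Submission
  imports Defs
    "Jordan_Normal_Form.Jordan_Normal_Form_Uniqueness"
    "Jordan_Normal_Form.Jordan_Normal_Form_Existence"
    "HOL-Combinatorics.List_Permutation"
begin

text \<open>Enumerate the simplices, let \<open>D\<close> be diagonal with entry \<open>1\<close> at vertices and \<open>-1\<close> at
  edges, and let \<open>B\<close> be the vertex-edge incidence matrix. Then \<open>L = D + B + B\<^sup>T + B\<^sup>T B\<close>,
  since \<open>B\<^sup>T B\<close> counts the common vertices of two edges. From \<open>D\<^sup>2 = 1\<close>, \<open>B\<^sup>2 = 0\<close>,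
  \<open>B D = -B\<close> and \<open>D B = B\<close> one gets that \<open>L\<close> is invertible, reverses the skew form
  \<open>\<Omega> = B - B\<^sup>T\<close> (\<open>L \<Omega> L = -\<Omega>\<close>), and that \<open>L\<^sup>2\<close> fixes \<open>ker \<Omega>\<close> pointwise. So
  \<open>M = L\<^sup>2\<close> is symmetric positive definite with \<open>M \<Omega> M = \<Omega>\<close>. Since \<open>\<Omega>\<close> maps the
  \<open>\<mu>\<close>-eigenspace of \<open>M\<close> to the \<open>\<mu>\<inverse>\<close>-eigenspace, the eigenvalues \<open>\<mu> \<noteq> 1\<close>
  come in pairs \<open>\<mu>, \<mu>\<inverse>\<close> of equal multiplicity, and as \<open>n + m\<close> is even, \<open>M\<close> is
  similar to a diagonal matrix \<open>diag(a\<^sub>1,\<dots>,a\<^sub>k,a\<^sub>1\<inverse>,\<dots>,a\<^sub>k\<inverse>)\<close>, which is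
  symplectic.\<close>

section \<open>Diagonal matrices\<close>

lemma dim_mat_diag[simp]: "dim_row (mat_diag n f) = n" "dim_col (mat_diag n f) = n"
  unfolding mat_diag_def by simp_all

abbreviation diag_of_list :: "'a :: zero list \<Rightarrow> 'a mat" where
  "diag_of_list ds \<equiv> mat_diag (length ds) ((!) ds)"

definition permutation_mat :: "nat \<Rightarrow> (nat \<Rightarrow> nat) \<Rightarrow> 'a :: comm_ring_1 mat" where
  "permutation_mat n f = mat n n (\<lambda>(i,j). if j = f i then 1 else 0)"

lemma permutation_mat_mult_transpose:
  assumes bij: "bij_betw f {..<n} {..<n}"
  shows "permutation_mat n f * transpose_mat (permutation_mat n f) = (1\<^sub>m n :: 'a :: comm_ring_1 mat)"
proof (rule eq_matI)
  fix i j assume "i < dim_row (1\<^sub>m n :: 'a mat)" "j < dim_col (1\<^sub>m n :: 'a mat)"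
  then have i: "i < n" and j: "j < n" by auto
  have "(permutation_mat n f * transpose_mat (permutation_mat n f)) $$ (i,j)
      = (\<Sum>k\<in>{0..<n}. (if k = f i then 1 else 0) * (if k = f j then 1 else 0) :: 'a)"
    using i j by (auto simp: permutation_mat_def scalar_prod_def)
  also have "\<dots> = (\<Sum>k\<in>{0..<n}. if k = f i then (if f i = f j then 1 else 0) else 0)"
    by (rule sum.cong) auto
  moreover have "f i < n" "f i = f j \<longleftrightarrow> i = j"
    using bij i j by (auto simp: bij_betw_def inj_on_def)
  ultimately show "(permutation_mat n f * transpose_mat (permutation_mat n f) :: 'a mat) $$ (i,j) = 1\<^sub>m n $$ (i,j)"
    using i j by simp
qed (auto simp: permutation_mat_def)

lemma transpose_permutation_mat_mult:
  assumes bij: "bij_betw f {..<n} {..<n}"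
  shows "transpose_mat (permutation_mat n f) * permutation_mat n f = (1\<^sub>m n :: 'a :: comm_ring_1 mat)"
proof (rule eq_matI)
  fix i j assume "i < dim_row (1\<^sub>m n :: 'a mat)" "j < dim_col (1\<^sub>m n :: 'a mat)"
  then have i: "i < n" and j: "j < n" by auto
  let ?g = "\<lambda>l. (if i = l then 1 else 0) * (if j = l then 1 else 0) :: 'a"
  have "(transpose_mat (permutation_mat n f) * permutation_mat n f) $$ (i,j) = (\<Sum>k\<in>{0..<n}. ?g (f k))"
    using i j by (auto simp: permutation_mat_def scalar_prod_def)
  also have "\<dots> = (\<Sum>l\<in>{0..<n}. ?g l)"
    using sum.reindex_bij_betw[OF bij] by (simp add: lessThan_atLeast0)
  also have "\<dots> = (\<Sum>l\<in>{0..<n}. if i = l then (if j = i then 1 else 0) else 0)"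
    by (rule sum.cong) auto
  finally show "(transpose_mat (permutation_mat n f) * permutation_mat n f :: 'a mat) $$ (i,j) = 1\<^sub>m n $$ (i,j)"
    using i j by (cases "i = j") simp_all
qed (auto simp: permutation_mat_def)

lemma diag_of_list_permutation_conj:
  fixes xs ys :: "'a :: comm_ring_1 list"
  assumes bij: "bij_betw f {..<n} {..<n}" and len: "length xs = n" "length ys = n"
    and xy: "\<And>i. i < n \<Longrightarrow> xs ! i = ys ! f i"
  shows "diag_of_list xs = permutation_mat n f * diag_of_list ys * transpose_mat (permutation_mat n f)"
    (is "_ = ?P * _ * ?Q")
proof (rule eq_matI)
  have P: "?P \<in> carrier_mat n n" by (simp add: permutation_mat_def)
  fix i j assume "i < dim_row (?P * diag_of_list ys * ?Q)" "j < dim_col (?P * diag_of_list ys * ?Q)"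
  then have i: "i < n" and j: "j < n" by (simp_all add: permutation_mat_def)
  have "?P * diag_of_list ys = mat n n (\<lambda>(i,j). ?P $$ (i,j) * ys ! j)"
    using mat_diag_mult_right[OF P, of "(!) ys"] len(2) by simp
  then have "(?P * diag_of_list ys * ?Q) $$ (i,j) = (\<Sum>l\<in>{0..<n}. (?P $$ (i,l) * ys ! l) * ?Q $$ (l,j))"
    using i j P by (simp add: scalar_prod_def)
  also have "\<dots> = (\<Sum>l\<in>{0..<n}. if l = f i then (if f i = f j then ys ! f i else 0) else 0)"
    by (rule sum.cong) (use i j in \<open>auto simp: permutation_mat_def\<close>)
  finally show "diag_of_list xs $$ (i,j) = (?P * diag_of_list ys * ?Q) $$ (i,j)"
    using bij i j xy[OF i] len unfolding bij_betw_def inj_on_def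
    by (cases "i = j") (auto simp: mat_diag_def)
qed (simp_all add: len permutation_mat_def)

lemma similar_mat_diag_of_list_perm:
  fixes xs ys :: "'a :: comm_ring_1 list"
  assumes "mset xs = mset ys"
  shows "similar_mat (diag_of_list xs) (diag_of_list ys)"
proof -
  define n where "n = length xs"
  have len: "length ys = n" unfolding n_def using mset_eq_length[OF assms] by simp
  obtain f where bij: "bij_betw f {..<n} {..<n}" and xy: "\<And>i. i < n \<Longrightarrow> xs ! i = ys ! f i"
    using permutation_Ex_bij[OF assms] unfolding n_def len[unfolded n_def] by auto
  show ?thesis
    using diag_of_list_permutation_conj[OF bij n_def[symmetric] len xy]
      permutation_mat_mult_transpose[OF bij] transpose_permutation_mat_mult[OF bij] len n_def
    by (intro similar_matI[of _ _ "permutation_mat n f" "transpose_mat (permutation_mat n f)" n])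
      (auto simp: permutation_mat_def)
qed

lemma symplectic_mat_diag_reciprocal:
  fixes as :: "real list"
  assumes nz: "\<forall>a\<in>set as. a \<noteq> 0"
  shows "symplectic_mat (length as) (diag_of_list (as @ map inverse as))"
proof -
  define k where "k = length as"
  define ds where "ds = as @ map inverse as"
  define J where "J = std_symplectic k"
  have len: "length ds = 2 * k" unfolding ds_def k_def by simp
  have J: "J \<in> carrier_mat (2*k) (2*k)" unfolding J_def std_symplectic_def mult_2 by simp
  have Jij: "J $$ (i,j) = (if i < k then (if j < k then 0 else (if j - k = i then 1 else 0))
       else (if j < k then (if i - k = j then -1 else 0) else 0))" if "i < 2*k" "j < 2*k" for i j
    unfolding J_def std_symplectic_def using that by (auto simp: mult_2)
  have S: "transpose_mat (mat_diag (2*k) ((!) ds)) = mat_diag (2*k) ((!) ds)"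
    by (intro eq_matI) (auto simp: mat_diag_def)
  have "transpose_mat (mat_diag (2*k) ((!) ds)) * J * mat_diag (2*k) ((!) ds)
      = mat (2*k) (2*k) (\<lambda>(i,j). ds ! i * J $$ (i,j) * ds ! j)"
    unfolding S mat_diag_mult_left[OF J] by (subst mat_diag_mult_right) auto
  also have "\<dots> = J"
  proof (rule eq_matI)
    fix i j assume "i < dim_row J" "j < dim_col J"
    then have i: "i < 2*k" and j: "j < 2*k" using J by auto
    have "as ! i \<noteq> 0" if "i < k" for i using nz that unfolding k_def by auto
    then have "ds ! i * J $$ (i,j) * ds ! j = J $$ (i,j)"
      using i j unfolding Jij[OF i j] ds_def by (auto simp: nth_append k_def)
    then show "mat (2*k) (2*k) (\<lambda>(i,j). ds ! i * J $$ (i,j) * ds ! j) $$ (i,j) = J $$ (i,j)"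
      using i j by simp
  qed (use J in auto)
  finally show ?thesis
    unfolding symplectic_mat_def J_def k_def[symmetric] ds_def[symmetric] len by simp
qed

section \<open>Real symmetric matrices\<close>

lemma conjugate_of_real_mult_mat_vec:
  fixes A :: "real mat" and v :: "complex vec"
  assumes A: "A \<in> carrier_mat nr n" and v: "v \<in> carrier_vec n"
  shows "conjugate (map_mat complex_of_real A *\<^sub>v v) = map_mat complex_of_real A *\<^sub>v conjugate v"
proof (rule eq_vecI)
  fix i assume "i < dim_vec (map_mat complex_of_real A *\<^sub>v conjugate v)"
  then have i: "i < nr" using A by auto
  have "conjugate (map_mat complex_of_real A *\<^sub>v v) $ i
      = conjugate (\<Sum>j<n. complex_of_real (A $$ (i,j)) * v $ j)"
    using A v i by (auto simp: mult_mat_vec_def scalar_prod_def lessThan_atLeast0)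
  also have "\<dots> = (\<Sum>j<n. complex_of_real (A $$ (i,j)) * conjugate (v $ j))"
    by (simp add: sum_conjugate conjugate_dist_mul)
  also have "\<dots> = (map_mat complex_of_real A *\<^sub>v conjugate v) $ i"
    using A v i by (auto simp: mult_mat_vec_def scalar_prod_def lessThan_atLeast0)
  finally show "conjugate (map_mat complex_of_real A *\<^sub>v v) $ i = (map_mat complex_of_real A *\<^sub>v conjugate v) $ i" .
qed (use A in auto)

lemma eigenvalue_of_real_symmetric_is_real:
  fixes A :: "real mat"
  assumes A: "A \<in> carrier_mat n n" and sym: "transpose_mat A = A"
    and ev: "eigenvalue (map_mat complex_of_real A) a"
  shows "cnj a = a"
proof -
  let ?A = "map_mat complex_of_real A"
  have Ac: "?A \<in> carrier_mat n n" using A by auto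
  have symc: "transpose_mat ?A = ?A"
    by (metis sym map_mat_transpose)
  from ev obtain v where v: "v \<in> carrier_vec n" "v \<noteq> 0\<^sub>v n" and Av: "?A *\<^sub>v v = a \<cdot>\<^sub>v v"
    unfolding eigenvalue_def eigenvector_def using Ac by auto
  define p where "p = v \<bullet> conjugate v"
  define q where "q = (?A *\<^sub>v v) \<bullet> conjugate v"
  have q: "q = a * p" unfolding q_def p_def Av using v by auto
  have p0: "p \<noteq> 0" unfolding p_def using conjugate_square_eq_0_vec[OF v(1)] v(2) by auto
  have cp: "conjugate p = p" unfolding p_def
    using conjugate_vec_sprod_comm[OF v(1) v(1)] conjugate_conjugate_sprod[OF v(1) v(1)] by simp
  have "conjugate q = conjugate (?A *\<^sub>v v) \<bullet> v"
    unfolding q_def using conjugate_sprod_vec[of "?A *\<^sub>v v" n "conjugate v"] v Ac by simp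
  also have "\<dots> = (transpose_mat ?A *\<^sub>v conjugate v) \<bullet> v"
    using conjugate_of_real_mult_mat_vec[OF A v(1)] symc by simp
  also have "\<dots> = conjugate v \<bullet> (?A *\<^sub>v v)"
    by (rule transpose_vec_mult_scalar[OF Ac], use v in auto)
  also have "\<dots> = q" unfolding q_def by (rule comm_scalar_prod[of _ n], use v Ac in auto)
  finally have "conjugate a * p = a * p" using cp unfolding q by (simp add: conjugate_dist_mul)
  then show ?thesis using p0 by simp
qed

lemma char_poly_real_symmetric_splits:
  fixes A :: "real mat"
  assumes A: "A \<in> carrier_mat n n" and sym: "transpose_mat A = A"
  shows "\<exists>es. char_poly A = (\<Prod>e\<leftarrow>es. [:- e, 1:])"
proof -
  let ?A = "map_mat complex_of_real A"
  have Ac: "?A \<in> carrier_mat n n" using A by auto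
  obtain as where cp: "char_poly ?A = (\<Prod>a\<leftarrow>as. [:- a, 1:])"
    using char_poly_factorized[OF Ac] by auto
  have "complex_of_real (Re a) = a" if a: "a \<in> set as" for a
  proof -
    have "poly (char_poly ?A) a = 0" unfolding cp using a by (induct as) auto
    then have "eigenvalue ?A a" using eigenvalue_root_char_poly[OF Ac] by simp
    then have "cnj a = a" by (rule eigenvalue_of_real_symmetric_is_real[OF A sym])
    then show ?thesis by (simp add: complex_eq_iff)
  qed
  then have real_roots: "map (complex_of_real \<circ> Re) as = as" by (induct as) auto
  interpret of_real_poly: map_poly_inj_comm_ring_hom complex_of_real ..
  have "map_poly complex_of_real (char_poly A) = map_poly complex_of_real (\<Prod>e\<leftarrow>map Re as. [:- e, 1:])"
    unfolding of_real_hom.char_poly_hom[OF A, symmetric] cp of_real_poly.hom_prod_list map_map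
    by (subst (1) real_roots[symmetric]) (simp add: o_def)
  then have "char_poly A = (\<Prod>e\<leftarrow>map Re as. [:- e, 1:])"
    by simp
  then show ?thesis by blast
qed

lemma mult_mat_vec_zero:
  assumes "A \<in> carrier_mat nr nc"
  shows "A *\<^sub>v 0\<^sub>v nc = 0\<^sub>v nr"
  using assms by (intro eq_vecI) (auto simp: scalar_prod_def)

lemma kernel_dim_le_if_mat_kernel_subset:
  fixes A D :: "'a :: field mat"
  assumes A: "A \<in> carrier_mat nr n" and D: "D \<in> carrier_mat nr' n"
    and sub: "mat_kernel A \<subseteq> mat_kernel D"
  shows "kernel_dim A \<le> kernel_dim D"
proof -
  interpret KA: kernel nr n A by (unfold_locales, rule A)
  interpret KD: kernel nr' n D by (unfold_locales, rule D)
  obtain bA where fA: "finite bA" and bA: "KA.basis bA" using kernel_basis_exists[OF A] by auto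
  obtain bD where fD: "finite bD" and bD: "KD.basis bD" using kernel_basis_exists[OF D] by auto
  have subA: "bA \<subseteq> mat_kernel A" and liA: "\<not> KA.lin_dep bA"
    using bA unfolding KA.Ker.basis_def by auto
  have subD: "bA \<subseteq> mat_kernel D" using subA sub by auto
  have "\<not> KD.lin_dep bA" using liA KA.lindep_same[OF subA] KD.lindep_same[OF subD] by simp
  moreover have "KD.Ker.fin_dim" unfolding KD.Ker.fin_dim_def
    using fD bD unfolding KD.Ker.basis_def by auto
  ultimately have "card bA \<le> KD.dim" using KD.Ker.li_le_dim(2)[of bA] subD by auto
  then show ?thesis using KA.Ker.dim_basis[OF fA bA] A D by (simp add: kernel_dim_def)
qed

lemma mat_kernel_char_matrix:
  fixes M :: "'a :: field mat"
  assumes M: "M \<in> carrier_mat n n"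
  shows "v \<in> mat_kernel (char_matrix M \<mu>) \<longleftrightarrow> v \<in> carrier_vec n \<and> M *\<^sub>v v = \<mu> \<cdot>\<^sub>v v"
proof (cases "v = 0\<^sub>v n")
  case True
  then show ?thesis using True M mult_mat_vec_zero[OF char_matrix_closed[OF M]]
    by (auto intro!: mat_kernelI[of _ n n])
next
  case False
  then show ?thesis using eigenvector_char_matrix[OF M, of v \<mu>] M
    by (auto simp: mat_kernel[OF char_matrix_closed[OF M]] eigenvector_def)
qed

lemma mat_kernel_mult_self_symmetric:
  fixes C :: "real mat"
  assumes C: "C \<in> carrier_mat n n" and sym: "transpose_mat C = C"
  shows "mat_kernel (C * C) = mat_kernel C"
proof
  show "mat_kernel C \<subseteq> mat_kernel (C * C)"
    using mat_kernel_mult_subset[OF C C] .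
  show "mat_kernel (C * C) \<subseteq> mat_kernel C"
  proof
    fix v assume "v \<in> mat_kernel (C * C)"
    then have v: "v \<in> carrier_vec n" and CCv: "C *\<^sub>v (C *\<^sub>v v) = 0\<^sub>v n"
      using mat_kernelD[of "C * C" n n] C by auto
    have "(C *\<^sub>v v) \<bullet> (C *\<^sub>v v) = (transpose_mat C *\<^sub>v v) \<bullet> (C *\<^sub>v v)" using sym by simp
    also have "\<dots> = v \<bullet> (C *\<^sub>v (C *\<^sub>v v))" by (rule transpose_vec_mult_scalar[OF C], use C v in auto)
    finally have "(C *\<^sub>v v) \<bullet> (C *\<^sub>v v) = 0" using CCv v by simp
    then have "C *\<^sub>v v = 0\<^sub>v n" using conjugate_square_eq_0_vec[of "C *\<^sub>v v" n] C v by auto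
    then show "v \<in> mat_kernel C" by (rule mat_kernelI[OF C v])
  qed
qed

lemma sum_list_min_2_eq_min_1:
  assumes "(\<Sum>x\<leftarrow>xs. min 2 x) = (\<Sum>x\<leftarrow>xs. min (1::nat) x)" and "x \<in> set xs"
  shows "x \<le> 1"
  using assms
proof (induct xs)
  case (Cons y ys)
  have "(\<Sum>x\<leftarrow>ys. min 1 x) \<le> (\<Sum>x\<leftarrow>ys. min (2::nat) x)"
    by (induct ys) auto
  then have "min 1 y = min 2 y" "(\<Sum>x\<leftarrow>ys. min 2 x) = (\<Sum>x\<leftarrow>ys. min (1::nat) x)"
    using Cons(2) by auto
  then show ?case using Cons by auto
qed simp

lemma jordan_matrix_unit_blocks: "jordan_matrix (map (\<lambda>e. (1,e)) ds) = diag_of_list ds"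
proof (induct ds)
  case Nil
  show ?case unfolding jordan_matrix_def mat_diag_def by (intro eq_matI) auto
next
  case (Cons d ds)
  have "jordan_matrix (map (\<lambda>e. (1,e)) (d # ds)) = four_block_mat (jordan_block 1 d)
      (0\<^sub>m 1 (length ds)) (0\<^sub>m (length ds) 1) (diag_of_list ds)"
    using Cons unfolding jordan_matrix_def by (simp add: Let_def)
  then show ?case unfolding mat_diag_def by (intro eq_matI) (auto simp: nth_Cons')
qed

lemma transpose_char_matrix:
  assumes "M \<in> carrier_mat n n"
  shows "transpose_mat (char_matrix M e) = char_matrix (transpose_mat M) e"
  using assms by (intro eq_matI) (auto simp: char_matrix_def)

lemma jordan_nf_real_symmetric_unit_blocks:
  fixes M :: "real mat"
  assumes M: "M \<in> carrier_mat n n" and sym: "transpose_mat M = M"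
    and jnf: "jordan_nf M n_as" and ke: "(k, e) \<in> set n_as"
  shows "k = 1"
proof -
  let ?C = "char_matrix M e"
  have C: "?C \<in> carrier_mat n n" using M by simp
  have "transpose_mat ?C = ?C"
    using transpose_char_matrix[OF M] sym by simp
  then have "kernel_dim (?C * ?C) = kernel_dim ?C"
    using mat_kernel_mult_self_symmetric[OF C] by (simp add: kernel_dim_def)
  then have "dim_gen_eigenspace M e 2 = dim_gen_eigenspace M e 1"
    unfolding dim_gen_eigenspace_def using C by (simp add: numeral_2_eq_2)
  then have "(\<Sum>x\<leftarrow>map fst [(n, e')\<leftarrow>n_as . e' = e]. min 2 x) = (\<Sum>x\<leftarrow>map fst [(n, e')\<leftarrow>n_as . e' = e]. min 1 x)"
    unfolding dim_gen_eigenspace[OF jnf] .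
  moreover have "k \<in> set (map fst [(n, e')\<leftarrow>n_as . e' = e])" using ke by force
  ultimately have "k \<le> 1" by (rule sum_list_min_2_eq_min_1)
  moreover have "k \<noteq> 0" using jnf ke unfolding jordan_nf_def by force
  ultimately show "k = 1" by simp
qed

lemma real_symmetric_diagonalizable:
  fixes M :: "real mat"
  assumes M: "M \<in> carrier_mat n n" and sym: "transpose_mat M = M"
  obtains ds where "length ds = n" "similar_mat M (diag_of_list ds)"
    "\<And>\<mu>. count (mset ds) \<mu> = kernel_dim (char_matrix M \<mu>)"
proof -
  obtain es where "char_poly M = (\<Prod>e\<leftarrow>es. [:- e, 1:])"
    using char_poly_real_symmetric_splits[OF M sym] by auto
  then obtain n_as where jnf: "jordan_nf M n_as" using jordan_nf_exists[OF M] by auto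
  define ds where "ds = map snd n_as"
  have n_as: "n_as = map (\<lambda>e. (1,e)) ds"
    using jordan_nf_real_symmetric_unit_blocks[OF M sym jnf] unfolding ds_def
    by (induct n_as) auto
  have sim: "similar_mat M (diag_of_list ds)"
    using jnf unfolding jordan_nf_def n_as jordan_matrix_unit_blocks by simp
  obtain n' where "M \<in> carrier_mat n' n'" "diag_of_list ds \<in> carrier_mat n' n'"
    using similar_matD[OF sim] by blast
  then have len: "length ds = n" using M by (auto dest!: carrier_matD)
  have count: "count (mset ds) \<mu> = kernel_dim (char_matrix M \<mu>)" for \<mu>
  proof -
    have "kernel_dim (char_matrix M \<mu>) = dim_gen_eigenspace M \<mu> 1"
      unfolding dim_gen_eigenspace_def using M by simp
    also have "\<dots> = count (mset ds) \<mu>"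
      unfolding dim_gen_eigenspace[OF jnf] n_as by (induct ds) simp_all
    finally show ?thesis by simp
  qed
  show ?thesis using that[OF len sim count] .
qed

section \<open>Spectra closed under inversion\<close>

lemma reciprocal_pair_subset_mset:
  fixes A :: "real multiset"
  assumes x: "x \<in># A" "x > 0" "x \<noteq> 1" and recip: "count A x = count A (inverse x)"
  shows "{#x, inverse x#} \<subseteq># A"
proof -
  have x_inv: "inverse x \<noteq> x"
  proof
    assume "inverse x = x"
    then have "x * x = 1" using x(2) by (metis right_inverse less_irrefl)
    then have "(x - 1) * (x + 1) = 0" by (simp add: algebra_simps)
    then show False using x by auto
  qed
  have x_inv_in: "inverse x \<in># A" using x(1) recip by (metis count_greater_zero_iff)
  show ?thesis unfolding subseteq_mset_def
  proof
    fix a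
    show "count {#x, inverse x#} a \<le> count A a"
      using x(1) x_inv x_inv_in by (cases "a = x"; cases "a = inverse x") auto
  qed
qed

lemma mset_reciprocal_pairing:
  fixes A :: "real multiset"
  assumes "\<forall>x\<in>#A. x > 0" and "\<forall>\<mu>. \<mu> \<noteq> 1 \<longrightarrow> count A \<mu> = count A (inverse \<mu>)"
    and "even (size A)"
  shows "\<exists>as. A = mset (as @ map inverse as)"
  using assms
proof (induct "size A" arbitrary: A rule: less_induct)
  case less
  show ?case
  proof (cases "\<exists>x\<in>#A. x \<noteq> 1")
    case True
    then obtain x where x: "x \<in># A" "x \<noteq> 1" by auto
    define B where "B = {#x, inverse x#}"
    have sub: "B \<subseteq># A" unfolding B_def
      using reciprocal_pair_subset_mset x less(2) less(3)[rule_format, OF x(2)] by blast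
    define A' where "A' = A - B"
    have size: "size A' < size A" "size A' = size A - 2"
      using size_Diff_submset[OF sub] size_mset_mono[OF sub] unfolding A'_def B_def by auto
    have "\<forall>x\<in>#A'. x > 0" using less(2) unfolding A'_def by (meson in_diffD)
    moreover have "\<forall>\<mu>. \<mu> \<noteq> 1 \<longrightarrow> count A' \<mu> = count A' (inverse \<mu>)"
    proof (intro allI impI)
      fix \<mu> :: real assume "\<mu> \<noteq> 1"
      have "count B \<mu> = count B (inverse \<mu>)" unfolding B_def by (auto simp: inverse_eq_iff_eq)
      then show "count A' \<mu> = count A' (inverse \<mu>)"
        using less(3)[rule_format, OF \<open>\<mu> \<noteq> 1\<close>] unfolding A'_def by simp
    qed
    moreover have "even (size A')" using size less(4) by auto
    ultimately obtain as where "A' = mset (as @ map inverse as)"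
      using less(1)[OF size(1)] by blast
    moreover have "A = A' + B" unfolding A'_def using sub by (simp add: subset_mset.diff_add)
    ultimately have "A = mset ((x # as) @ map inverse (x # as))" unfolding B_def by auto
    then show ?thesis by blast
  next
    case False
    then have "A = replicate_mset (size A) 1"
      by (intro set_mset_subset_singletonD) auto
    moreover have "size A = size A div 2 + size A div 2" using less(4) by auto
    ultimately have "A = mset (replicate (size A div 2) 1 @ map inverse (replicate (size A div 2) 1))"
      by (metis map_replicate inverse_1 mset_append mset_replicate replicate_add)
    then show ?thesis by blast
  qed
qed

lemma skew_quadratic_form_zero:
  fixes Om :: "real mat"
  assumes Om: "Om \<in> carrier_mat n n" and skew: "transpose_mat Om = - Om" and v: "v \<in> carrier_vec n"
  shows "v \<bullet> (Om *\<^sub>v v) = 0"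
proof -
  have "v \<bullet> (Om *\<^sub>v v) = (transpose_mat Om *\<^sub>v v) \<bullet> v"
    by (rule transpose_vec_mult_scalar[OF Om v v, symmetric])
  also have "\<dots> = - ((Om *\<^sub>v v) \<bullet> v)" using skew Om v by simp
  also have "(Om *\<^sub>v v) \<bullet> v = v \<bullet> (Om *\<^sub>v v)" by (rule comm_scalar_prod[of _ n], use Om v in auto)
  finally show ?thesis by simp
qed

lemma kernel_dim_mult_right_injective:
  fixes C X :: "'a :: field mat"
  assumes C: "C \<in> carrier_mat nr n" and X: "X \<in> carrier_mat n n"
    and inj: "\<And>v. v \<in> carrier_vec n \<Longrightarrow> X *\<^sub>v v = 0\<^sub>v n \<Longrightarrow> v = 0\<^sub>v n"
  shows "kernel_dim (C * X) = kernel_dim C"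
proof -
  have "det X \<noteq> 0" using det_0_iff_vec_prod_zero[OF X] inj by auto
  then obtain Y where Y: "Y \<in> carrier_mat n n" and XY: "X * Y = 1\<^sub>m n"
    using det_non_zero_imp_unit[OF X] by (auto simp: Units_def ring_mat_def)
  show ?thesis
    using mat_kernel_dim_mult_eq_right[OF C X Y XY] C X by (simp add: kernel_dim_def)
qed

lemma kernel_dim_pos_imp_nonzero_kernel:
  fixes A :: "'a :: field mat"
  assumes A: "A \<in> carrier_mat n n" and pos: "kernel_dim A > 0"
  obtains v where "v \<in> mat_kernel A" "v \<noteq> 0\<^sub>v n"
proof (rule ccontr)
  assume "\<not> thesis"
  have "mat_kernel A \<subseteq> mat_kernel (1\<^sub>m n :: 'a mat)"
  proof
    fix v assume v: "v \<in> mat_kernel A"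
    then have "v = 0\<^sub>v n" using that \<open>\<not> thesis\<close> by blast
    then show "v \<in> mat_kernel (1\<^sub>m n)" by (auto intro: mat_kernelI[of _ n n])
  qed
  from kernel_dim_le_if_mat_kernel_subset[OF A one_carrier_mat this]
  have "kernel_dim A = 0" using kernel_one_mat(1)[of n, where 'a = 'a] A by (simp add: kernel_dim_def)
  then show False using pos by simp
qed

lemma skew_plus_symmetric_square_injective:
  fixes Om A :: "real mat"
  assumes Om: "Om \<in> carrier_mat n n" and A: "A \<in> carrier_mat n n"
    and skew: "transpose_mat Om = - Om" and symA: "transpose_mat A = A"
    and common_kernel: "\<And>v. v \<in> carrier_vec n \<Longrightarrow> Om *\<^sub>v v = 0\<^sub>v n \<Longrightarrow> A *\<^sub>v v = 0\<^sub>v n \<Longrightarrow> v = 0\<^sub>v n"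
    and v: "v \<in> carrier_vec n" and Xv: "(Om + A * A) *\<^sub>v v = 0\<^sub>v n"
  shows "v = 0\<^sub>v n"
proof -
  have split: "(Om + A * A) *\<^sub>v v = Om *\<^sub>v v + A *\<^sub>v (A *\<^sub>v v)"
    using Om A v by (simp add: add_mult_distrib_mat_vec[of _ n n])
  have "v \<bullet> (Om *\<^sub>v v + A *\<^sub>v (A *\<^sub>v v)) = 0" using Xv split v by simp
  then have "0 = v \<bullet> (Om *\<^sub>v v) + v \<bullet> (A *\<^sub>v (A *\<^sub>v v))"
    using v Om A by (simp add: scalar_prod_add_distrib[of _ n])
  also have "v \<bullet> (A *\<^sub>v (A *\<^sub>v v)) = (A *\<^sub>v v) \<bullet> (A *\<^sub>v v)"
    using transpose_vec_mult_scalar[OF A _ v, of "A *\<^sub>v v"] symA A v by simp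
  finally have "(A *\<^sub>v v) \<bullet> (A *\<^sub>v v) = 0" using skew_quadratic_form_zero[OF Om skew v] by simp
  then have Av: "A *\<^sub>v v = 0\<^sub>v n" using conjugate_square_eq_0_vec[of "A *\<^sub>v v" n] A v by auto
  then have "Om *\<^sub>v v = 0\<^sub>v n" using Xv split mult_mat_vec_zero[OF A] Om v by simp
  then show ?thesis using common_kernel[OF v _ Av] by simp
qed

lemma invariant_form_maps_eigenvector_to_reciprocal:
  fixes M Om :: "'a :: field mat"
  assumes M: "M \<in> carrier_mat n n" and Om: "Om \<in> carrier_mat n n" and MOmM: "M * Om * M = Om"
    and v: "v \<in> carrier_vec n" and Mv: "M *\<^sub>v v = \<mu> \<cdot>\<^sub>v v" and \<mu>: "\<mu> \<noteq> 0"
  shows "M *\<^sub>v (Om *\<^sub>v v) = inverse \<mu> \<cdot>\<^sub>v (Om *\<^sub>v v)"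
proof -
  have "Om *\<^sub>v v = (M * Om * M) *\<^sub>v v" by (simp add: MOmM)
  also have "\<dots> = M *\<^sub>v (Om *\<^sub>v (M *\<^sub>v v))"
    using assoc_mult_mat_vec[OF mult_carrier_mat[OF M Om] M v]
      assoc_mult_mat_vec[OF M Om mult_mat_vec_carrier[OF M v]] by simp
  also have "\<dots> = \<mu> \<cdot>\<^sub>v (M *\<^sub>v (Om *\<^sub>v v))" unfolding Mv using M Om v by (simp add: mult_mat_vec)
  finally have "inverse \<mu> \<cdot>\<^sub>v (Om *\<^sub>v v) = (inverse \<mu> * \<mu>) \<cdot>\<^sub>v (M *\<^sub>v (Om *\<^sub>v v))"
    by (metis smult_smult_assoc)
  then show ?thesis using \<mu> by simp
qed

text \<open>\<open>Om\<close> maps the \<open>\<mu>\<close>-eigenspace of \<open>M\<close> into the \<open>\<mu>\<inverse>\<close>-eigenspace but need not be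
  injective there; \<open>X = Om + (M - \<mu>)\<^sup>2\<close> agrees with \<open>Om\<close> on the \<open>\<mu>\<close>-eigenspace and is
  invertible.\<close>
lemma kernel_dim_eigenspace_le_reciprocal:
  fixes M Om :: "real mat"
  assumes M: "M \<in> carrier_mat n n" and Om: "Om \<in> carrier_mat n n"
    and symM: "transpose_mat M = M" and skew: "transpose_mat Om = - Om"
    and MOmM: "M * Om * M = Om"
    and fixed: "\<And>v. v \<in> carrier_vec n \<Longrightarrow> Om *\<^sub>v v = 0\<^sub>v n \<Longrightarrow> M *\<^sub>v v = v"
    and \<mu>: "\<mu> \<noteq> 0" "\<mu> \<noteq> 1"
  shows "kernel_dim (char_matrix M \<mu>) \<le> kernel_dim (char_matrix M (inverse \<mu>))"
proof -
  let ?A = "char_matrix M \<mu>" and ?C = "char_matrix M (inverse \<mu>)"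
  define X where "X = Om + ?A * ?A"
  have A: "?A \<in> carrier_mat n n" and C: "?C \<in> carrier_mat n n" using M by auto
  have X: "X \<in> carrier_mat n n" using A Om unfolding X_def by auto
  have symA: "transpose_mat ?A = ?A" using transpose_char_matrix[OF M] symM by simp
  have common_kernel: "v = 0\<^sub>v n"
    if v: "v \<in> carrier_vec n" "Om *\<^sub>v v = 0\<^sub>v n" "?A *\<^sub>v v = 0\<^sub>v n" for v
  proof (rule eq_vecI)
    fix i assume i: "i < dim_vec (0\<^sub>v n :: real vec)"
    have "M *\<^sub>v v = \<mu> \<cdot>\<^sub>v v" using mat_kernel_char_matrix[OF M] mat_kernelI[OF A v(1,3)] by blast
    then have v_eq: "v = \<mu> \<cdot>\<^sub>v v" using fixed[OF v(1,2)] by simp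
    have "v $ i = \<mu> * v $ i" using arg_cong[OF v_eq, of "\<lambda>w. w $ i"] i v(1) by simp
    then show "v $ i = 0\<^sub>v n $ i" using \<mu>(2) i by auto
  qed (use v in auto)
  have X_inj: "v = 0\<^sub>v n" if "v \<in> carrier_vec n" "X *\<^sub>v v = 0\<^sub>v n" for v
  proof (rule skew_plus_symmetric_square_injective[OF Om A skew symA _ that(1)])
    show "(Om + ?A * ?A) *\<^sub>v v = 0\<^sub>v n" using that(2) unfolding X_def .
  qed (fact common_kernel)
  have "mat_kernel ?A \<subseteq> mat_kernel (?C * X)"
  proof
    fix v assume "v \<in> mat_kernel ?A"
    then have v: "v \<in> carrier_vec n" and Mv: "M *\<^sub>v v = \<mu> \<cdot>\<^sub>v v" and Av: "?A *\<^sub>v v = 0\<^sub>v n"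
      using mat_kernel_char_matrix[OF M] mat_kernelD[OF A] by blast+
    have "X *\<^sub>v v = Om *\<^sub>v v"
      unfolding X_def using Om A v Av mult_mat_vec_zero[OF A] by (simp add: add_mult_distrib_mat_vec[of _ n n])
    moreover have "Om *\<^sub>v v \<in> mat_kernel ?C"
      unfolding mat_kernel_char_matrix[OF M]
      using invariant_form_maps_eigenvector_to_reciprocal[OF M Om MOmM v Mv \<mu>(1)] Om v by simp
    then have "?C *\<^sub>v (Om *\<^sub>v v) = 0\<^sub>v n" using mat_kernelD[OF C] by blast
    ultimately show "v \<in> mat_kernel (?C * X)" using C X v by (auto intro!: mat_kernelI[of _ n n])
  qed
  then have "kernel_dim ?A \<le> kernel_dim (?C * X)"
    by (rule kernel_dim_le_if_mat_kernel_subset[OF A mult_carrier_mat[OF C X]])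
  then show ?thesis using kernel_dim_mult_right_injective[OF C X X_inj] by simp
qed

lemma eigenvalue_square_symmetric_pos:
  fixes L :: "real mat"
  assumes L: "L \<in> carrier_mat n n" and sym: "transpose_mat L = L"
    and inj: "\<And>v. v \<in> carrier_vec n \<Longrightarrow> L *\<^sub>v v = 0\<^sub>v n \<Longrightarrow> v = 0\<^sub>v n"
    and v: "v \<in> carrier_vec n" "v \<noteq> 0\<^sub>v n" and ev: "(L * L) *\<^sub>v v = \<mu> \<cdot>\<^sub>v v"
  shows "\<mu> > 0"
proof -
  have Lv: "L *\<^sub>v v \<in> carrier_vec n" "L *\<^sub>v v \<noteq> 0\<^sub>v n" using L v inj by auto
  have "0 < (L *\<^sub>v v) \<bullet> (L *\<^sub>v v)" using conjugate_square_greater_0_vec[OF Lv(1)] Lv(2) by simp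
  also have "\<dots> = v \<bullet> (L *\<^sub>v (L *\<^sub>v v))"
    using transpose_vec_mult_scalar[OF L Lv(1) v(1)] sym by simp
  also have "\<dots> = \<mu> * (v \<bullet> v)" using ev L v by simp
  finally show ?thesis
    using conjugate_square_greater_0_vec[OF v(1)] v(2) by (simp add: zero_less_mult_iff)
qed

lemma similar_symplectic_if_reciprocal_spectrum:
  fixes M :: "real mat"
  assumes M: "M \<in> carrier_mat (2*k) (2*k)" and sym: "transpose_mat M = M"
    and pos: "\<And>\<mu> v. v \<in> carrier_vec (2*k) \<Longrightarrow> v \<noteq> 0\<^sub>v (2*k) \<Longrightarrow> M *\<^sub>v v = \<mu> \<cdot>\<^sub>v v \<Longrightarrow> \<mu> > 0"
    and recip: "\<And>\<mu>. \<mu> \<noteq> 1 \<Longrightarrow> kernel_dim (char_matrix M \<mu>) = kernel_dim (char_matrix M (inverse \<mu>))"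
  shows "\<exists>S. symplectic_mat k S \<and> similar_mat M S"
proof -
  obtain ds where len: "length ds = 2*k" and sim: "similar_mat M (diag_of_list ds)"
    and count: "\<And>\<mu>. count (mset ds) \<mu> = kernel_dim (char_matrix M \<mu>)"
    using real_symmetric_diagonalizable[OF M sym] by blast
  have pos_ds: "\<forall>\<mu>\<in>#mset ds. \<mu> > 0"
  proof
    fix \<mu> assume "\<mu> \<in># mset ds"
    then have "kernel_dim (char_matrix M \<mu>) > 0" using count[of \<mu>] by (metis count_greater_zero_iff)
    then obtain v where "v \<in> mat_kernel (char_matrix M \<mu>)" "v \<noteq> 0\<^sub>v (2*k)"
      using kernel_dim_pos_imp_nonzero_kernel[OF char_matrix_closed[OF M]] by blast
    then show "\<mu> > 0" using pos mat_kernel_char_matrix[OF M] by blast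
  qed
  moreover have "\<forall>\<mu>. \<mu> \<noteq> 1 \<longrightarrow> count (mset ds) \<mu> = count (mset ds) (inverse \<mu>)"
    unfolding count using recip by blast
  moreover have "even (size (mset ds))" using len by simp
  ultimately obtain as where as: "mset ds = mset (as @ map inverse as)"
    using mset_reciprocal_pairing by blast
  have "length as = k" using mset_eq_length[OF as] len by simp
  moreover have "\<forall>a\<in>set as. a \<noteq> 0"
    using pos_ds unfolding as by fastforce
  ultimately have "symplectic_mat k (diag_of_list (as @ map inverse as))"
    using symplectic_mat_diag_reciprocal by metis
  moreover have "similar_mat M (diag_of_list (as @ map inverse as))"
    using similar_mat_trans[OF sim similar_mat_diag_of_list_perm[OF as]] .
  ultimately show ?thesis by blast
qed

lemma square_similar_symplectic:
  fixes L Om :: "real mat"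
  assumes L: "L \<in> carrier_mat (2*k) (2*k)" and sym: "transpose_mat L = L"
    and inj: "\<And>v. v \<in> carrier_vec (2*k) \<Longrightarrow> L *\<^sub>v v = 0\<^sub>v (2*k) \<Longrightarrow> v = 0\<^sub>v (2*k)"
    and Om: "Om \<in> carrier_mat (2*k) (2*k)" and skew: "transpose_mat Om = - Om"
    and LOmL: "L * Om * L = - Om"
    and fixed: "\<And>v. v \<in> carrier_vec (2*k) \<Longrightarrow> Om *\<^sub>v v = 0\<^sub>v (2*k) \<Longrightarrow> L *\<^sub>v (L *\<^sub>v v) = v"
  shows "\<exists>S. symplectic_mat k S \<and> similar_mat (L * L) S"
proof (rule similar_symplectic_if_reciprocal_spectrum)
  let ?M = "L * L"
  show M: "?M \<in> carrier_mat (2*k) (2*k)" using L by simp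
  show symM: "transpose_mat ?M = ?M" using transpose_mult[OF L L] sym by simp
  show "\<mu> > 0" if "v \<in> carrier_vec (2*k)" "v \<noteq> 0\<^sub>v (2*k)" "?M *\<^sub>v v = \<mu> \<cdot>\<^sub>v v" for \<mu> v
    using eigenvalue_square_symmetric_pos[OF L sym inj that] .
  interpret R: ring "ring_mat TYPE(real) (2*k) ()" by (rule ring_mat)
  have "?M * Om * ?M = L * (L * Om * L) * L"
    using L Om by (simp add: R.m_assoc[unfolded ring_mat_simps] R.m_closed[unfolded ring_mat_simps])
  then have MOmM: "?M * Om * ?M = Om" using L Om LOmL by simp
  have fixedM: "?M *\<^sub>v v = v" if "v \<in> carrier_vec (2*k)" "Om *\<^sub>v v = 0\<^sub>v (2*k)" for v
    using fixed[OF that] L that(1) by simp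
  show "kernel_dim (char_matrix ?M \<mu>) = kernel_dim (char_matrix ?M (inverse \<mu>))" if "\<mu> \<noteq> 1" for \<mu>
  proof (cases "\<mu> = 0")
    case False
    then have "inverse \<mu> \<noteq> 0" "inverse \<mu> \<noteq> 1" using that by (auto simp: inverse_eq_iff_eq)
    from kernel_dim_eigenspace_le_reciprocal[OF M Om symM skew MOmM fixedM this]
    have "kernel_dim (char_matrix ?M (inverse \<mu>)) \<le> kernel_dim (char_matrix ?M \<mu>)"
      by simp
    moreover have "kernel_dim (char_matrix ?M \<mu>) \<le> kernel_dim (char_matrix ?M (inverse \<mu>))"
      by (rule kernel_dim_eigenspace_le_reciprocal[OF M Om symM skew MOmM fixedM False that])
    ultimately show ?thesis by simp
  qed simp
qed

section \<open>The signed incidence algebra\<close>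

lemma ring_mat_a_inv:
  assumes "A \<in> carrier_mat n n"
  shows "\<ominus>\<^bsub>ring_mat TYPE('a :: comm_ring_1) n b\<^esub> A = - A"
proof -
  interpret R: ring "ring_mat TYPE('a) n b" by (rule ring_mat)
  show ?thesis using assms by (intro R.minus_equality) (auto simp: ring_mat_simps)
qed

lemma ring_mat_a_minus:
  assumes "A \<in> carrier_mat n n" "B \<in> carrier_mat n n"
  shows "A \<ominus>\<^bsub>ring_mat TYPE('a :: comm_ring_1) n b\<^esub> B = A - B"
  using assms by (simp add: a_minus_def ring_mat_a_inv ring_mat_simps minus_add_uminus_mat)

text \<open>\<open>d\<close>, \<open>b\<close> and \<open>t\<close> abstract the sign matrix, the vertex-edge incidence matrix and its
  transpose.\<close>
locale signed_incidence = ring +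
  fixes d b t
  assumes closed: "d \<in> carrier R" "b \<in> carrier R" "t \<in> carrier R"
    and d_d: "d \<otimes> d = \<one>" and b_b: "b \<otimes> b = \<zero>" and t_t: "t \<otimes> t = \<zero>"
    and b_d: "b \<otimes> d = \<ominus> b" and d_b: "d \<otimes> b = b" and t_d: "t \<otimes> d = t" and d_t: "d \<otimes> t = \<ominus> t"
begin

text \<open>The simplifier normalises products to right-nested form, so the relations are needed in
  that form as well.\<close>
lemma relations_right_nested:
  assumes "x \<in> carrier R"
  shows "d \<otimes> (d \<otimes> x) = x" "b \<otimes> (b \<otimes> x) = \<zero>" "t \<otimes> (t \<otimes> x) = \<zero>"
    "b \<otimes> (d \<otimes> x) = \<ominus> (b \<otimes> x)" "d \<otimes> (b \<otimes> x) = b \<otimes> x"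
    "t \<otimes> (d \<otimes> x) = t \<otimes> x" "d \<otimes> (t \<otimes> x) = \<ominus> (t \<otimes> x)"
  using assms closed by (simp_all add: m_assoc[symmetric] d_d b_b t_t b_d d_b t_d d_t l_minus)

lemma add_neg_cancel:
  assumes "x \<in> carrier R" "y \<in> carrier R" "z \<in> carrier R"
  shows "x \<oplus> (y \<oplus> \<ominus> x) = y" "x \<oplus> (y \<oplus> (\<ominus> x \<oplus> z)) = y \<oplus> z"
  using assms by (simp_all add: a_lcomm[of x y] r_neg r_neg2)

lemmas ring_normalize = ring_simprules relations_right_nested d_d b_b t_t b_d d_b t_d d_t add_neg_cancel

lemma connection_form_reversed:
  "(d \<oplus> b \<oplus> t \<oplus> t \<otimes> b) \<otimes> (b \<ominus> t) \<otimes> (d \<oplus> b \<oplus> t \<oplus> t \<otimes> b) = \<ominus> (b \<ominus> t)"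
  using closed by (simp add: ring_normalize)

lemma connection_left_inverse:
  "(d \<oplus> b) \<otimes> (\<one> \<ominus> t) \<otimes> (d \<oplus> b \<oplus> t \<oplus> t \<otimes> b) = \<one>"
  using closed by (simp add: ring_normalize)

lemma form_double_incidence: "(\<one> \<oplus> d) \<otimes> (b \<ominus> t) = b \<oplus> b"
  using closed by (simp add: ring_normalize)

text \<open>Every summand except \<open>\<one>\<close> ends in \<open>t\<close> or \<open>b\<close>, so the square of the connection
  element is the identity on the common kernel of \<open>b\<close> and \<open>t\<close>.\<close>
lemma connection_square:
  "(d \<oplus> b \<oplus> t \<oplus> t \<otimes> b) \<otimes> (d \<oplus> b \<oplus> t \<oplus> t \<otimes> b)
    = \<one> \<oplus> (b \<oplus> t \<otimes> b) \<otimes> t \<oplus> (b \<otimes> t \<oplus> t \<otimes> b \<otimes> t \<ominus> t) \<otimes> b"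
  using closed by (simp add: ring_normalize)

end

lemma vec_zero_if_double_zero:
  fixes x :: "real vec"
  assumes "x \<in> carrier_vec n" and "x + x = 0\<^sub>v n"
  shows "x = 0\<^sub>v n"
proof (rule eq_vecI)
  fix i assume "i < dim_vec (0\<^sub>v n :: real vec)"
  then show "x $ i = 0\<^sub>v n $ i" using arg_cong[OF assms(2), of "\<lambda>w. w $ i"] assms(1) by simp
qed (use assms in auto)

context
  fixes D B :: "real mat" and N :: nat
  assumes D: "D \<in> carrier_mat N N" and B: "B \<in> carrier_mat N N"
    and DD: "D * D = 1\<^sub>m N" and BB: "B * B = 0\<^sub>m N N" and BD: "B * D = - B" and DB: "D * B = B"
    and DT: "transpose_mat D = D"
begin

lemma signed_incidence_ring_mat: "signed_incidence (ring_mat TYPE(real) N ()) D B (transpose_mat B)"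
proof -
  have "transpose_mat B * transpose_mat B = 0\<^sub>m N N"
    using arg_cong[OF BB, of transpose_mat] transpose_mult[OF B B] by simp
  moreover have "transpose_mat B * D = transpose_mat B"
    using arg_cong[OF DB, of transpose_mat] transpose_mult[OF D B] DT by simp
  moreover have "D * transpose_mat B = - transpose_mat B"
    using arg_cong[OF BD, of transpose_mat] transpose_mult[OF B D] DT by (simp add: transpose_uminus)
  ultimately show ?thesis
    using D B DD BB BD DB by (intro signed_incidence.intro[OF ring_mat] signed_incidence_axioms.intro)
      (auto simp: ring_mat_simps ring_mat_a_inv)
qed

lemma signed_connection_identities:
  defines "T \<equiv> transpose_mat B"
  defines "L \<equiv> D + B + T + T * B" and "Om \<equiv> B - T"
  shows "transpose_mat L = L" "transpose_mat Om = - Om" "L * Om * L = - Om"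
    "(D + B) * (1\<^sub>m N - T) * L = 1\<^sub>m N" "(1\<^sub>m N + D) * Om = B + B"
    "L * L = 1\<^sub>m N + (B + T * B) * T + (B * T + T * B * T - T) * B"
proof -
  interpret signed_incidence "ring_mat TYPE(real) N ()" D B T
    unfolding T_def by (rule signed_incidence_ring_mat)
  have T: "T \<in> carrier_mat N N" unfolding T_def using B by simp
  note mat_simps = ring_mat_simps ring_mat_a_inv ring_mat_a_minus minus_carrier_mat
  have "transpose_mat (T * B) = T * B" using transpose_mult[OF T B] unfolding T_def by simp
  then show "transpose_mat L = L"
    unfolding L_def using D B T DT by (simp add: transpose_add) (intro eq_matI; simp add: T_def)
  show "transpose_mat Om = - Om" unfolding Om_def T_def using B by (intro eq_matI) auto
  show "L * Om * L = - Om"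
    using connection_form_reversed D B T unfolding L_def Om_def by (simp add: mat_simps)
  show "(D + B) * (1\<^sub>m N - T) * L = 1\<^sub>m N"
    using connection_left_inverse D B T unfolding L_def by (simp add: mat_simps)
  show "(1\<^sub>m N + D) * Om = B + B"
    using form_double_incidence D B T unfolding Om_def by (simp add: mat_simps)
  show "L * L = 1\<^sub>m N + (B + T * B) * T + (B * T + T * B * T - T) * B"
    using connection_square D B T unfolding L_def by (simp add: mat_simps)
qed

lemma signed_connection_injective:
  defines "L \<equiv> D + B + transpose_mat B + transpose_mat B * B"
  assumes v: "v \<in> carrier_vec N" and Lv: "L *\<^sub>v v = 0\<^sub>v N"
  shows "v = 0\<^sub>v N"
proof -
  let ?Y = "(D + B) * (1\<^sub>m N - transpose_mat B)"
  have Y: "?Y \<in> carrier_mat N N" using D B by (auto intro!: minus_carrier_mat)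
  have L: "L \<in> carrier_mat N N" unfolding L_def using D B by simp
  have "v = (?Y * L) *\<^sub>v v" using v signed_connection_identities(4) unfolding L_def by simp
  also have "\<dots> = ?Y *\<^sub>v (L *\<^sub>v v)" using assoc_mult_mat_vec[OF Y L v] .
  finally show ?thesis unfolding Lv mult_mat_vec_zero[OF Y] .
qed

lemma signed_connection_square_fixes_form_kernel:
  defines "L \<equiv> D + B + transpose_mat B + transpose_mat B * B" and "Om \<equiv> B - transpose_mat B"
  assumes v: "v \<in> carrier_vec N" and Omv: "Om *\<^sub>v v = 0\<^sub>v N"
  shows "L *\<^sub>v (L *\<^sub>v v) = v"
proof -
  let ?T = "transpose_mat B"
  note ids = signed_connection_identities[folded L_def Om_def]
  have T: "?T \<in> carrier_mat N N" using B by simp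
  have L: "L \<in> carrier_mat N N" unfolding L_def using D B by simp
  have Om: "Om \<in> carrier_mat N N" unfolding Om_def using B by (simp add: minus_carrier_mat)
  have "B *\<^sub>v v + B *\<^sub>v v = ((1\<^sub>m N + D) * Om) *\<^sub>v v"
    unfolding ids(5) using B v by (simp add: add_mult_distrib_mat_vec)
  also have "\<dots> = (1\<^sub>m N + D) *\<^sub>v (Om *\<^sub>v v)" using D Om v by (intro assoc_mult_mat_vec) auto
  also have "\<dots> = 0\<^sub>v N" unfolding Omv using D by (intro mult_mat_vec_zero) simp
  finally have "B *\<^sub>v v + B *\<^sub>v v = 0\<^sub>v N" .
  from vec_zero_if_double_zero[OF _ this] have Bv: "B *\<^sub>v v = 0\<^sub>v N" using B v by simp
  have "- (?T *\<^sub>v v) = 0\<^sub>v N"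
    using Omv minus_mult_distrib_mat_vec[OF B T v] T v unfolding Om_def Bv by simp
  then have Tv: "?T *\<^sub>v v = 0\<^sub>v N" by (metis uminus_uminus_vec uminus_zero_vec)
  define P where "P = B + ?T * B"
  define Q where "Q = B * ?T + ?T * B * ?T - ?T"
  have P: "P \<in> carrier_mat N N" and Q: "Q \<in> carrier_mat N N"
    unfolding P_def Q_def using B T by (auto intro!: minus_carrier_mat)
  have "L *\<^sub>v (L *\<^sub>v v) = (L * L) *\<^sub>v v" using L v by simp
  also have "\<dots> = (1\<^sub>m N + P * ?T + Q * B) *\<^sub>v v" unfolding ids(6) P_def Q_def ..
  also have "\<dots> = v + P *\<^sub>v (?T *\<^sub>v v) + Q *\<^sub>v (B *\<^sub>v v)"
    using P Q B T v by (simp add: add_mult_distrib_mat_vec[of _ N N])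
  also have "\<dots> = v" unfolding Tv Bv mult_mat_vec_zero[OF P] mult_mat_vec_zero[OF Q] using v by simp
  finally show ?thesis .
qed

end

lemma signed_connection_square_similar_symplectic:
  fixes D B :: "real mat"
  assumes "D \<in> carrier_mat (2*k) (2*k)" "B \<in> carrier_mat (2*k) (2*k)"
    "D * D = 1\<^sub>m (2*k)" "B * B = 0\<^sub>m (2*k) (2*k)" "B * D = - B" "D * B = B" "transpose_mat D = D"
  defines "L \<equiv> D + B + transpose_mat B + transpose_mat B * B"
  shows "\<exists>S. symplectic_mat k S \<and> similar_mat (L * L) S"
proof (rule square_similar_symplectic)
  let ?Om = "B - transpose_mat B"
  note ids = signed_connection_identities[OF assms(1-7), folded L_def]
  show "L \<in> carrier_mat (2*k) (2*k)" unfolding L_def using assms(1,2) by simp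
  show "?Om \<in> carrier_mat (2*k) (2*k)" using assms(2) by (simp add: minus_carrier_mat)
  show "transpose_mat L = L" "transpose_mat ?Om = - ?Om" "L * ?Om * L = - ?Om"
    using ids(1-3) .
  show "v = 0\<^sub>v (2*k)" if "v \<in> carrier_vec (2*k)" "L *\<^sub>v v = 0\<^sub>v (2*k)" for v
    using signed_connection_injective[OF assms(1-7) that[unfolded L_def]] .
  show "L *\<^sub>v (L *\<^sub>v v) = v" if "v \<in> carrier_vec (2*k)" "?Om *\<^sub>v v = 0\<^sub>v (2*k)" for v
    using signed_connection_square_fixes_form_kernel[OF assms(1-7) that] unfolding L_def .
qed

section \<open>The connection matrix of a graph\<close>

definition simplex_sign_mat :: "'a set set \<Rightarrow> (nat \<Rightarrow> 'a set) \<Rightarrow> nat \<Rightarrow> real mat" where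
  "simplex_sign_mat E f N = mat_diag N (\<lambda>i. if f i \<in> E then -1 else 1)"

definition vertex_edge_incidence_mat :: "'a set set \<Rightarrow> (nat \<Rightarrow> 'a set) \<Rightarrow> nat \<Rightarrow> real mat" where
  "vertex_edge_incidence_mat E f N =
     mat N N (\<lambda>(i,j). if f i \<notin> E \<and> f j \<in> E \<and> f i \<subseteq> f j then 1 else 0)"

lemma simplex_sign_mat_carrier: "simplex_sign_mat E f N \<in> carrier_mat N N"
  unfolding simplex_sign_mat_def by simp

lemma vertex_edge_incidence_mat_carrier: "vertex_edge_incidence_mat E f N \<in> carrier_mat N N"
  unfolding vertex_edge_incidence_mat_def by simp

lemma simplex_sign_mat_square: "simplex_sign_mat E f N * simplex_sign_mat E f N = 1\<^sub>m N"
  unfolding simplex_sign_mat_def mat_diag_diag unfolding mat_diag_def by (intro eq_matI) auto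

lemma simplex_sign_mat_transpose: "transpose_mat (simplex_sign_mat E f N) = simplex_sign_mat E f N"
  unfolding simplex_sign_mat_def mat_diag_def by (intro eq_matI) auto

lemma vertex_edge_incidence_mat_square:
  "vertex_edge_incidence_mat E f N * vertex_edge_incidence_mat E f N = 0\<^sub>m N N"
  unfolding vertex_edge_incidence_mat_def
  by (intro eq_matI) (auto simp: scalar_prod_def intro!: sum.neutral)

lemma vertex_edge_incidence_mat_sign_right:
  "vertex_edge_incidence_mat E f N * simplex_sign_mat E f N = - vertex_edge_incidence_mat E f N"
  unfolding simplex_sign_mat_def mat_diag_mult_right[OF vertex_edge_incidence_mat_carrier]
  by (intro eq_matI) (auto simp: vertex_edge_incidence_mat_def)

lemma vertex_edge_incidence_mat_sign_left:
  "simplex_sign_mat E f N * vertex_edge_incidence_mat E f N = vertex_edge_incidence_mat E f N"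
  unfolding simplex_sign_mat_def mat_diag_mult_left[OF vertex_edge_incidence_mat_carrier]
  by (intro eq_matI) (auto simp: vertex_edge_incidence_mat_def)

lemma card_inter_two_element_sets:
  assumes "card e = 2" "card e' = 2" "e \<noteq> e'"
  shows "card (e \<inter> e') = (if e \<inter> e' = {} then 0 else 1)"
proof -
  have fin: "finite e" "finite e'" using assms(1,2) by (auto intro: card_ge_0_finite)
  have "card (e \<inter> e') \<noteq> 2"
    using card_subset_eq[OF fin(1), of "e \<inter> e'"] card_subset_eq[OF fin(2), of "e \<inter> e'"] assms by auto
  moreover have "card (e \<inter> e') \<le> 2" using card_mono[OF fin(1), of "e \<inter> e'"] assms(1) by auto
  moreover have "card (e \<inter> e') = 0 \<longleftrightarrow> e \<inter> e' = {}" using fin by simp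
  ultimately show ?thesis by auto
qed

context
  fixes V :: "'a set" and E :: "'a set set"
  assumes G: "simple_graph V E"
begin

lemma simplex_cases:
  assumes "s \<in> simplices V E"
  obtains "s \<in> E" "finite s" "card s = 2" | v where "v \<in> V" "s = {v}" "s \<notin> E"
proof -
  have "finite e" "card e = 2" "e \<subseteq> V" if "e \<in> E" for e
    using G that finite_subset unfolding simple_graph_def by blast+
  moreover have "{v} \<notin> E" for v using G unfolding simple_graph_def by force
  ultimately show ?thesis using assms that unfolding simplices_def by blast
qed

lemma vertex_simplices_in:
  assumes "X \<subseteq> V"
  shows "{s \<in> simplices V E. s \<notin> E \<and> s \<subseteq> X} = (\<lambda>v. {v}) ` X"
proof -
  have "{v} \<notin> E" for v using G unfolding simple_graph_def by force
  then show ?thesis using assms by (auto simp: simplices_def elim!: simplex_cases)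
qed

lemma connection_entry_decomposition:
  assumes s: "s \<in> simplices V E" and s': "s' \<in> simplices V E"
  shows "(if s \<inter> s' \<noteq> {} then 1 else 0) =
    (if s = s' then (if s \<in> E then -1 else 1) else 0)
    + (if s \<notin> E \<and> s' \<in> E \<and> s \<subseteq> s' then 1 else 0)
    + (if s' \<notin> E \<and> s \<in> E \<and> s' \<subseteq> s then 1 else 0)
    + (if s \<in> E \<and> s' \<in> E then real (card (s \<inter> s')) else (0::real))"
  using s
proof (cases rule: simplex_cases)
  case 1
  from s' show ?thesis
  proof (cases rule: simplex_cases)
    case 1
    then show ?thesis using \<open>s \<in> E\<close> \<open>card s = 2\<close> card_inter_two_element_sets[of s s'] by auto
  qed (use 1 in auto)
next
  case (2 v)
  from s' show ?thesis by (cases rule: simplex_cases) (use 2 in auto)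
qed

end

lemma finite_simplices:
  assumes "simple_graph V E"
  shows "finite (simplices V E)"
proof -
  have "E \<subseteq> Pow V" using assms unfolding simple_graph_def by auto
  then have "finite E" using assms unfolding simple_graph_def by (meson finite_Pow_iff finite_subset)
  then show ?thesis using assms unfolding simple_graph_def simplices_def by simp
qed

lemma vertex_edge_incidence_gram_entry:
  assumes G: "simple_graph V E" and bij: "bij_betw f {0..<N} (simplices V E)"
    and i: "i < N" and j: "j < N"
  defines "B \<equiv> vertex_edge_incidence_mat E f N"
  shows "(transpose_mat B * B) $$ (i,j) = (if f i \<in> E \<and> f j \<in> E then real (card (f i \<inter> f j)) else 0)"
proof -
  let ?c = "f i \<in> E \<and> f j \<in> E" and ?P = "\<lambda>s. s \<notin> E \<and> s \<subseteq> f i \<inter> f j"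
  have "(transpose_mat B * B) $$ (i,j) = (\<Sum>k\<in>{0..<N}. if ?c \<and> ?P (f k) then 1 else 0)"
    using i j unfolding B_def vertex_edge_incidence_mat_def
    by (auto simp: scalar_prod_def intro!: sum.cong)
  also have "\<dots> = (\<Sum>s\<in>simplices V E. if ?c \<and> ?P s then 1 else 0)"
    by (rule sum.reindex_bij_betw[OF bij])
  also have "\<dots> = (if ?c then real (card {s \<in> simplices V E. ?P s}) else 0)"
    using sum.inter_filter[OF finite_simplices[OF G], of "\<lambda>_. 1 :: real" ?P] by auto
  also have "\<dots> = (if ?c then real (card (f i \<inter> f j)) else 0)"
  proof (cases ?c)
    case True
    then have "{s \<in> simplices V E. ?P s} = (\<lambda>v. {v}) ` (f i \<inter> f j)"
      using G vertex_simplices_in[OF G, of "f i \<inter> f j"] unfolding simple_graph_def by blast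
    then show ?thesis using True by (simp add: card_image)
  next
    case False
    then show ?thesis by (simp only: if_not_P if_False)
  qed
  finally show ?thesis .
qed

lemma connection_mat_decomposition:
  assumes G: "simple_graph V E" and bij: "bij_betw f {0..<N} (simplices V E)"
  defines "D \<equiv> simplex_sign_mat E f N" and "B \<equiv> vertex_edge_incidence_mat E f N"
  shows "connection_mat N f = D + B + transpose_mat B + transpose_mat B * B"
proof (rule eq_matI)
  fix i j assume "i < dim_row (D + B + transpose_mat B + transpose_mat B * B)"
    "j < dim_col (D + B + transpose_mat B + transpose_mat B * B)"
  then have i: "i < N" and j: "j < N" unfolding B_def D_def vertex_edge_incidence_mat_def by auto
  have s: "f i \<in> simplices V E" "f j \<in> simplices V E" and inj: "f i = f j \<longleftrightarrow> i = j"
    using bij i j unfolding bij_betw_def inj_on_def by auto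
  show "connection_mat N f $$ (i,j) = (D + B + transpose_mat B + transpose_mat B * B) $$ (i,j)"
    using connection_entry_decomposition[OF G s] vertex_edge_incidence_gram_entry[OF G bij i j] i j inj
    by (simp add: connection_mat_def D_def B_def simplex_sign_mat_def mat_diag_def
        vertex_edge_incidence_mat_def)
qed (simp_all add: connection_mat_def B_def D_def vertex_edge_incidence_mat_def)

theorem mainTheorem5:
  fixes V :: "'a set" and E :: "'a set set" and f :: "nat \<Rightarrow> 'a set"
  assumes "simple_graph V E"
    and "even (card V + card E)"
    and "bij_betw f {0..<card V + card E} (simplices V E)"
  shows "\<exists>S. symplectic_mat ((card V + card E) div 2) S \<and>
           similar_mat (connection_mat (card V + card E) f ^\<^sub>m 2) S"
proof -
  define k where "k = (card V + card E) div 2"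
  have N: "card V + card E = 2 * k" unfolding k_def using assms(2) by simp
  let ?D = "simplex_sign_mat E f (2*k)" and ?B = "vertex_edge_incidence_mat E f (2*k)"
  let ?L = "?D + ?B + transpose_mat ?B + transpose_mat ?B * ?B"
  have "connection_mat (2*k) f = ?L"
    using connection_mat_decomposition[OF assms(1) assms(3)[unfolded N]] .
  then have "connection_mat (2*k) f ^\<^sub>m 2 = ?L * ?L"
    by (simp add: numeral_2_eq_2 flip: \<open>connection_mat (2*k) f = ?L\<close>)
  moreover have "\<exists>S. symplectic_mat k S \<and> similar_mat (?L * ?L) S"
    by (rule signed_connection_square_similar_symplectic)
      (simp_all add: simplex_sign_mat_carrier vertex_edge_incidence_mat_carrier
        simplex_sign_mat_square vertex_edge_incidence_mat_square vertex_edge_incidence_mat_sign_right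
        vertex_edge_incidence_mat_sign_left simplex_sign_mat_transpose)
  ultimately show ?thesis unfolding N k_def[symmetric] by simp
qed

end
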